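(* Let $\mathbf{B}=\{z\in\mathbb{D}^\infty:z_j\to0\}$ be the open unit ball of $c_0$ and let $\phi=(\phi_j)_{j\ge1}:\mathbf{B}\to\mathbf{B}$ be an analytic map such that $C_\phi f=f\circ\phi$ maps $A^+(\mathbb{T}^\infty)$ into itself. If $C_\phi$ is an isometric automorphism of $A^+(\mathbb{T}^\infty)$, then $\phi(z)=(\epsilon_jz_{\sigma(j)})_{j\ge1}$ for some permutation $\sigma$ of $\mathbb{N}$ and some sequence $(\epsilon_j)_{j\ge1}$ of complex numbers of modulus $1$.
   Context: $A^+(\mathbb{T}^\infty)$ is the algebra of functions $f(z)=\sum_\alpha a_\alpha z^\alpha$ on $\overline{\mathbb{D}}^\infty$, $\alpha$ ranging over finitely supported sequences of non-negative integers, with $\|f\|=\sum|a_\alpha|<\infty$; a Banach algebra under pointwise multiplication. Analyticity on $\mathbf{B}$ is in the sense of holomorphic maps on the Banach space $c_0$. An automorphism is a bijective algebra homomorphism onto $A^+(\mathbb{T}^\infty)$. *)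

theory Defs
  imports "HOL-Analysis.Analysis"
begin

text \<open>Sequences are indexed by nat starting at 0 (the paper indexes from 1).\<close>

definition fin_multi :: "(nat \<Rightarrow> nat) \<Rightarrow> bool" where
  "fin_multi \<alpha> \<longleftrightarrow> finite {j. \<alpha> j \<noteq> 0}"

definition monom :: "(nat \<Rightarrow> nat) \<Rightarrow> (nat \<Rightarrow> complex) \<Rightarrow> complex" where
  "monom \<alpha> z = (\<Prod>j\<in>{j. \<alpha> j \<noteq> 0}. z j ^ \<alpha> j)"

definition Aplus_coeff :: "((nat \<Rightarrow> nat) \<Rightarrow> complex) \<Rightarrow> bool" where
  "Aplus_coeff a \<longleftrightarrow> (\<forall>\<alpha>. \<not> fin_multi \<alpha> \<longrightarrow> a \<alpha> = 0) \<and> (\<lambda>\<alpha>. cmod (a \<alpha>)) summable_on UNIV"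

definition Aplus_eval :: "((nat \<Rightarrow> nat) \<Rightarrow> complex) \<Rightarrow> (nat \<Rightarrow> complex) \<Rightarrow> complex" where
  "Aplus_eval a z = infsum (\<lambda>\<alpha>. a \<alpha> * monom \<alpha> z) UNIV"

definition c0 :: "(nat \<Rightarrow> complex) set" where
  "c0 = {z. z \<longlonglongrightarrow> 0}"

definition c0_norm :: "(nat \<Rightarrow> complex) \<Rightarrow> real" where
  "c0_norm z = (SUP j. cmod (z j))"

definition c0_ball :: "(nat \<Rightarrow> complex) set" where
  "c0_ball = {z. (\<forall>j. cmod (z j) < 1) \<and> z \<longlonglongrightarrow> 0}"

text \<open>Holomorphy on B in the sense of complex Frechet differentiability in the
  Banach space c_0 (with values in c_0).\<close>
definition c0_holomorphic_on :: "((nat \<Rightarrow> complex) \<Rightarrow> (nat \<Rightarrow> complex)) \<Rightarrow> (nat \<Rightarrow> complex) set \<Rightarrow> bool" where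
  "c0_holomorphic_on \<phi> U \<longleftrightarrow>
     (\<forall>z\<in>U. \<exists>L :: (nat \<Rightarrow> complex) \<Rightarrow> (nat \<Rightarrow> complex).
        (\<forall>x\<in>c0. \<forall>y\<in>c0. L (\<lambda>j. x j + y j) = (\<lambda>j. L x j + L y j)) \<and>
        (\<forall>x\<in>c0. \<forall>c::complex. L (\<lambda>j. c * x j) = (\<lambda>j. c * L x j)) \<and>
        (\<forall>x\<in>c0. L x \<in> c0) \<and>
        (\<exists>K. \<forall>x\<in>c0. c0_norm (L x) \<le> K * c0_norm x) \<and>
        (\<forall>\<epsilon>>0. \<exists>\<delta>>0. \<forall>h\<in>c0. c0_norm h < \<delta> \<longrightarrow>
            c0_norm ((\<lambda>j. \<phi> (\<lambda>i. z i + h i) j - \<phi> z j - L h j)) \<le> \<epsilon> * c0_norm h))"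

text \<open>Elements of A^+(T^infinity), regarded as functions on B (they are determined by
  their values there), and the norm (sum of absolute values of the coefficients).\<close>
definition Aplus :: "((nat \<Rightarrow> complex) \<Rightarrow> complex) set" where
  "Aplus = {restrict (Aplus_eval a) c0_ball | a. Aplus_coeff a}"

definition Aplus_norm :: "((nat \<Rightarrow> complex) \<Rightarrow> complex) \<Rightarrow> real" where
  "Aplus_norm f = (THE s. \<exists>a. Aplus_coeff a \<and> f = restrict (Aplus_eval a) c0_ball
                          \<and> s = infsum (\<lambda>\<alpha>. cmod (a \<alpha>)) UNIV)"

definition comp_op :: "((nat \<Rightarrow> complex) \<Rightarrow> (nat \<Rightarrow> complex)) \<Rightarrow> ((nat \<Rightarrow> complex) \<Rightarrow> complex) \<Rightarrow> ((nat \<Rightarrow> complex) \<Rightarrow> complex)" where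
  "comp_op \<phi> f = restrict (\<lambda>z. f (\<phi> z)) c0_ball"

end

theory Submission
  imports Defs
begin

text \<open>
  Coefficients of functions in A^+ are unique on the ball (peel off one variable at a time,
  letting it tend to 0).  Write \<phi> j = \<Sum> b \<alpha> z^\<alpha> with \<Sum> |b \<alpha>| = 1 and let c \<alpha> be the preimage of
  z^\<alpha> under C_\<phi>, of norm 1.  Then the superposition \<Sum> b \<alpha> c \<alpha> is a preimage of \<phi> j, so it is
  z j; its coefficient at z j is 1 = \<Sum> b \<alpha> c \<alpha> (e_j), which forces |c \<alpha> (e_j)| = 1 and hence
  c \<alpha> = c \<alpha> (e_j) z j whenever b \<alpha> \<noteq> 0.  So \<phi> j = \<epsilon> j z^(\<beta> j) with |\<epsilon> j| = 1.
  If no \<beta> i were the unit index e_k, every coordinate of \<phi> (t e_k) would be O(t^2), which is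
  incompatible with recovering z k = t from \<phi> (t e_k) by a function vanishing at 0.  Finally
  injectivity of C_\<phi> shows that every \<beta> i is such a unit index.
\<close>

lemma fin_multi_fun_upd [simp]: "fin_multi (\<beta>(n := k)) \<longleftrightarrow> fin_multi \<beta>"
proof -
  have "{j. (\<beta>(n := k)) j \<noteq> 0} - {n} = {j. \<beta> j \<noteq> 0} - {n}" by auto
  then show ?thesis
    unfolding fin_multi_def by (metis finite_Diff2 finite.emptyI finite_insert)
qed

lemma norm_monom: "cmod (monom \<alpha> z) = (\<Prod>j\<in>{j. \<alpha> j \<noteq> 0}. cmod (z j) ^ \<alpha> j)"
  by (simp add: monom_def prod_norm[symmetric] norm_power)

lemma norm_monom_le_1:
  assumes "\<forall>j. cmod (z j) \<le> 1"
  shows "cmod (monom \<alpha> z) \<le> 1"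
  unfolding norm_monom by (rule prod_le_1) (use assms in \<open>auto intro: power_le_one\<close>)

lemma norm_monom_le_coord:
  assumes "fin_multi \<alpha>" "\<alpha> j \<noteq> 0" "\<forall>k. cmod (z k) \<le> 1"
  shows "cmod (monom \<alpha> z) \<le> cmod (z j)"
proof -
  let ?S = "{j. \<alpha> j \<noteq> 0}"
  have "cmod (monom \<alpha> z) = cmod (z j) ^ \<alpha> j * (\<Prod>k\<in>?S - {j}. cmod (z k) ^ \<alpha> k)"
    unfolding norm_monom using assms(1,2) by (subst prod.remove[of _ j]) (auto simp: fin_multi_def)
  also have "\<dots> \<le> cmod (z j) ^ \<alpha> j"
    by (rule mult_left_le, rule prod_le_1) (use assms(3) in \<open>auto intro: power_le_one\<close>)
  also have "\<dots> \<le> cmod (z j)"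
    using power_decreasing[of 1 "\<alpha> j" "cmod (z j)"] assms(2,3) by simp
  finally show ?thesis .
qed

lemma monom_mult: "monom \<delta> (\<lambda>k. e k * z k) = monom \<delta> e * monom \<delta> z"
  unfolding monom_def power_mult_distrib by (rule prod.distrib)

lemma norm_monom_unimodular: "(\<And>k. cmod (e k) = 1) \<Longrightarrow> cmod (monom \<delta> e) = 1"
  by (simp add: norm_monom)

lemma monom_eq_0:
  assumes "fin_multi \<alpha>" "\<alpha> j \<noteq> 0" "z j = 0"
  shows "monom \<alpha> z = 0"
  unfolding monom_def using assms by (subst prod_zero_iff) (auto simp: fin_multi_def)

lemma monom_zero_index [simp]: "monom (\<lambda>_. 0) z = 1"
  by (simp add: monom_def)

lemma monom_fun_upd_other:
  assumes "\<alpha> n = 0"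
  shows "monom \<alpha> (z(n := r)) = monom \<alpha> z"
  unfolding monom_def using assms by (intro prod.cong) auto

lemma monom_increment:
  assumes "fin_multi \<beta>"
  shows "monom (\<beta>(n := Suc (\<beta> n))) z = z n * monom \<beta> z"
proof -
  let ?S = "{j. \<beta> j \<noteq> 0}"
  have fin: "finite ?S" using assms by (simp add: fin_multi_def)
  have "monom \<beta> z = (\<Prod>j\<in>insert n ?S. z j ^ \<beta> j)"
    unfolding monom_def using fin by (intro prod.mono_neutral_left) auto
  also have "\<dots> = z n ^ \<beta> n * (\<Prod>j\<in>?S - {n}. z j ^ \<beta> j)"
    using fin by (simp add: prod.insert_remove)
  finally have "z n * monom \<beta> z = z n ^ Suc (\<beta> n) * (\<Prod>j\<in>?S - {n}. z j ^ \<beta> j)"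
    by simp
  also have "\<dots> = (\<Prod>j\<in>insert n (?S - {n}). z j ^ (\<beta>(n := Suc (\<beta> n))) j)"
    using fin by (simp add: prod.insert_remove)
  also have "insert n (?S - {n}) = {j. (\<beta>(n := Suc (\<beta> n))) j \<noteq> 0}" by auto
  finally show ?thesis by (simp add: monom_def)
qed

definition unit_multi :: "nat \<Rightarrow> nat \<Rightarrow> nat" where
  "unit_multi k = (\<lambda>i. if i = k then 1 else 0)"

lemma fin_multi_unit_multi: "fin_multi (unit_multi k)"
  by (simp add: fin_multi_def unit_multi_def)

lemma monom_unit_multi [simp]: "monom (unit_multi k) z = z k"
proof -
  have "{j. unit_multi k j \<noteq> 0} = {k}" by (auto simp: unit_multi_def)
  then show ?thesis by (simp add: monom_def unit_multi_def)
qed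

lemma unit_multi_inject: "unit_multi k = unit_multi k' \<longleftrightarrow> k = k'"
  by (metis one_neq_zero unit_multi_def)

definition reindex_multi :: "(nat \<Rightarrow> nat) \<Rightarrow> (nat \<Rightarrow> nat) \<Rightarrow> nat \<Rightarrow> nat" where
  "reindex_multi \<tau> \<delta> = (\<lambda>m. if m \<in> range \<tau> then \<delta> (inv \<tau> m) else 0)"

lemma reindex_multi_apply: "inj \<tau> \<Longrightarrow> reindex_multi \<tau> \<delta> (\<tau> k) = \<delta> k"
  by (simp add: reindex_multi_def)

lemma reindex_multi_outside: "m \<notin> range \<tau> \<Longrightarrow> reindex_multi \<tau> \<delta> m = 0"
  by (simp add: reindex_multi_def)

lemma support_reindex_multi:
  assumes "inj \<tau>"
  shows "{m. reindex_multi \<tau> \<delta> m \<noteq> 0} = \<tau> ` {k. \<delta> k \<noteq> 0}"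
proof (intro equalityI subsetI)
  fix m assume m: "m \<in> {m. reindex_multi \<tau> \<delta> m \<noteq> 0}"
  then have "m \<in> range \<tau>" using reindex_multi_outside[of m \<tau> \<delta>] by auto
  then obtain k where "m = \<tau> k" by (rule rangeE)
  with m show "m \<in> \<tau> ` {k. \<delta> k \<noteq> 0}" by (simp add: reindex_multi_apply[OF assms])
next
  fix m assume "m \<in> \<tau> ` {k. \<delta> k \<noteq> 0}"
  then obtain k where "m = \<tau> k" "\<delta> k \<noteq> 0" by (rule imageE) simp
  then show "m \<in> {m. reindex_multi \<tau> \<delta> m \<noteq> 0}" by (simp add: reindex_multi_apply[OF assms])
qed

lemma fin_multi_reindex_multi: "inj \<tau> \<Longrightarrow> fin_multi \<delta> \<Longrightarrow> fin_multi (reindex_multi \<tau> \<delta>)"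
  unfolding fin_multi_def by (subst support_reindex_multi) simp_all

lemma monom_reindex_multi:
  assumes "inj \<tau>"
  shows "monom (reindex_multi \<tau> \<delta>) w = monom \<delta> (w \<circ> \<tau>)"
proof -
  have "monom (reindex_multi \<tau> \<delta>) w = (\<Prod>k\<in>{k. \<delta> k \<noteq> 0}. w (\<tau> k) ^ reindex_multi \<tau> \<delta> (\<tau> k))"
    unfolding monom_def support_reindex_multi[OF assms]
    by (rule prod.reindex[unfolded o_def]) (rule inj_on_subset[OF assms subset_UNIV])
  also have "\<dots> = monom \<delta> (w \<circ> \<tau>)"
    by (simp add: monom_def reindex_multi_apply[OF assms])
  finally show ?thesis .
qed

definition coeff_norm :: "((nat \<Rightarrow> nat) \<Rightarrow> complex) \<Rightarrow> real" where
  "coeff_norm a = infsum (\<lambda>\<alpha>. cmod (a \<alpha>)) UNIV"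

lemma coeff_norm_nonneg: "coeff_norm a \<ge> 0"
  unfolding coeff_norm_def by (rule infsum_nonneg) simp

lemma Aplus_coeff_summable: "Aplus_coeff a \<Longrightarrow> (\<lambda>\<alpha>. cmod (a \<alpha>)) summable_on UNIV"
  by (simp add: Aplus_coeff_def)

lemma Aplus_coeff_fin_multi: "Aplus_coeff a \<Longrightarrow> a \<alpha> \<noteq> 0 \<Longrightarrow> fin_multi \<alpha>"
  by (auto simp: Aplus_coeff_def)

lemma norm_coeff_le_coeff_norm: "Aplus_coeff a \<Longrightarrow> cmod (a \<alpha>) \<le> coeff_norm a"
  using finite_sum_le_infsum[OF Aplus_coeff_summable, of a "{\<alpha>}"] by (simp add: coeff_norm_def)

lemma abs_summable_Aplus_series:
  assumes "Aplus_coeff a" "\<forall>j. cmod (z j) \<le> 1"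
  shows "(\<lambda>\<alpha>. norm (a \<alpha> * monom \<alpha> z)) summable_on UNIV"
proof (rule Infinite_Sum.abs_summable_on_comparison_test')
  show "(\<lambda>\<alpha>. norm (a \<alpha>)) summable_on UNIV" by (rule Aplus_coeff_summable[OF assms(1)])
  show "norm (a \<alpha> * monom \<alpha> z) \<le> norm (a \<alpha>)" for \<alpha>
    using norm_monom_le_1[OF assms(2), of \<alpha>] by (simp add: norm_mult mult_left_le)
qed

lemma summable_Aplus_series:
  "Aplus_coeff a \<Longrightarrow> \<forall>j. cmod (z j) \<le> 1 \<Longrightarrow> (\<lambda>\<alpha>. a \<alpha> * monom \<alpha> z) summable_on UNIV"
  by (rule abs_summable_summable[OF abs_summable_Aplus_series])

lemma norm_Aplus_eval_le:
  assumes "Aplus_coeff a" "\<forall>j. cmod (z j) \<le> 1" "0 \<le> r"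
    and "\<And>\<alpha>. a \<alpha> \<noteq> 0 \<Longrightarrow> cmod (monom \<alpha> z) \<le> r"
  shows "cmod (Aplus_eval a z) \<le> r * coeff_norm a"
proof -
  have "cmod (Aplus_eval a z) \<le> infsum (\<lambda>\<alpha>. norm (a \<alpha> * monom \<alpha> z)) UNIV"
    unfolding Aplus_eval_def by (rule norm_infsum_bound[OF abs_summable_Aplus_series[OF assms(1,2)]])
  also have "\<dots> \<le> infsum (\<lambda>\<alpha>. r * cmod (a \<alpha>)) UNIV"
  proof (rule infsum_mono)
    show "norm (a \<alpha> * monom \<alpha> z) \<le> r * cmod (a \<alpha>)" for \<alpha>
      using assms(4)[of \<alpha>] by (cases "a \<alpha> = 0") (simp_all add: norm_mult mult.commute mult_left_mono)
  qed (intro abs_summable_Aplus_series summable_on_cmult_right Aplus_coeff_summable assms)+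
  also have "\<dots> = r * coeff_norm a"
    unfolding coeff_norm_def by (rule infsum_cmult_right[OF Aplus_coeff_summable[OF assms(1)]])
  finally show ?thesis .
qed

lemma Aplus_eval_at_0:
  assumes "Aplus_coeff a"
  shows "Aplus_eval a (\<lambda>_. 0) = a (\<lambda>_. 0)"
proof -
  have "a \<beta> * monom \<beta> (\<lambda>_. 0) = 0" if "\<beta> \<noteq> (\<lambda>_. 0)" for \<beta>
  proof (cases "a \<beta> = 0")
    case False
    obtain m where "\<beta> m \<noteq> 0" using \<open>\<beta> \<noteq> (\<lambda>_. 0)\<close> by auto
    with Aplus_coeff_fin_multi[OF assms False] show ?thesis by (simp add: monom_eq_0)
  qed simp
  then have "Aplus_eval a (\<lambda>_. 0) = infsum (\<lambda>\<beta>. a \<beta> * monom \<beta> (\<lambda>_. 0)) {\<lambda>_. 0}"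
    unfolding Aplus_eval_def by (intro infsum_cong_neutral) auto
  then show ?thesis by simp
qed

lemma norm_Aplus_eval_le_sup:
  assumes "Aplus_coeff a" "a (\<lambda>_. 0) = 0" "0 \<le> r" "\<forall>j. cmod (w j) \<le> min 1 r"
  shows "cmod (Aplus_eval a w) \<le> r * coeff_norm a"
proof (rule norm_Aplus_eval_le[OF assms(1) _ assms(3)])
  show "\<forall>j. cmod (w j) \<le> 1" using assms(4) by simp
  fix \<alpha> assume "a \<alpha> \<noteq> 0"
  moreover from this have "\<alpha> \<noteq> (\<lambda>_. 0)" using assms(2) by auto
  then obtain m where "\<alpha> m \<noteq> 0" by auto
  ultimately have "cmod (monom \<alpha> w) \<le> cmod (w m)"
    using assms(1,4) by (intro norm_monom_le_coord) (auto intro: Aplus_coeff_fin_multi)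
  then show "cmod (monom \<alpha> w) \<le> r" using assms(4) order_trans by fastforce
qed

lemma Aplus_coeff_restrict: "Aplus_coeff a \<Longrightarrow> Aplus_coeff (\<lambda>\<alpha>. if P \<alpha> then a \<alpha> else 0)"
  unfolding Aplus_coeff_def
  by (auto intro: summable_on_comparison_test[where f="\<lambda>\<alpha>. cmod (a \<alpha>)"])

lemma Aplus_eval_split:
  assumes "Aplus_coeff a" "\<forall>j. cmod (z j) \<le> 1"
  shows "Aplus_eval a z =
    Aplus_eval (\<lambda>\<alpha>. if P \<alpha> then a \<alpha> else 0) z + Aplus_eval (\<lambda>\<alpha>. if \<not> P \<alpha> then a \<alpha> else 0) z"
proof -
  have "Aplus_eval a z = infsum (\<lambda>\<alpha>. (if P \<alpha> then a \<alpha> else 0) * monom \<alpha> z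
                                   + (if \<not> P \<alpha> then a \<alpha> else 0) * monom \<alpha> z) UNIV"
    unfolding Aplus_eval_def by (intro infsum_cong) simp
  also have "\<dots> = Aplus_eval (\<lambda>\<alpha>. if P \<alpha> then a \<alpha> else 0) z
                  + Aplus_eval (\<lambda>\<alpha>. if \<not> P \<alpha> then a \<alpha> else 0) z"
    unfolding Aplus_eval_def
    by (intro infsum_add summable_Aplus_series Aplus_coeff_restrict assms)
  finally show ?thesis .
qed

lemma Aplus_coeff_diff:
  assumes "Aplus_coeff a" "Aplus_coeff b"
  shows "Aplus_coeff (\<lambda>\<alpha>. a \<alpha> - b \<alpha>)"
  unfolding Aplus_coeff_def
proof
  show "\<forall>\<alpha>. \<not> fin_multi \<alpha> \<longrightarrow> a \<alpha> - b \<alpha> = 0"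
    using assms by (simp add: Aplus_coeff_def)
  show "(\<lambda>\<alpha>. cmod (a \<alpha> - b \<alpha>)) summable_on UNIV"
    by (rule summable_on_comparison_test[where f="\<lambda>\<alpha>. cmod (a \<alpha>) + cmod (b \<alpha>)"])
      (auto intro: summable_on_add Aplus_coeff_summable[OF assms(1)] Aplus_coeff_summable[OF assms(2)]
        norm_triangle_ineq4)
qed

lemma Aplus_eval_diff:
  assumes "Aplus_coeff a" "Aplus_coeff b" "\<forall>j. cmod (z j) \<le> 1"
  shows "Aplus_eval (\<lambda>\<alpha>. a \<alpha> - b \<alpha>) z = Aplus_eval a z - Aplus_eval b z"
proof -
  have "Aplus_eval (\<lambda>\<alpha>. a \<alpha> - b \<alpha>) z = infsum (\<lambda>\<alpha>. a \<alpha> * monom \<alpha> z + - (b \<alpha> * monom \<alpha> z)) UNIV"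
    unfolding Aplus_eval_def by (simp add: left_diff_distrib)
  also have "\<dots> = Aplus_eval a z + - Aplus_eval b z"
    unfolding Aplus_eval_def infsum_uminus[symmetric]
    by (intro infsum_add summable_on_uminus[THEN iffD2] summable_Aplus_series assms)
  finally show ?thesis by simp
qed

definition monom_coeff :: "(nat \<Rightarrow> nat) \<Rightarrow> complex \<Rightarrow> (nat \<Rightarrow> nat) \<Rightarrow> complex" where
  "monom_coeff \<gamma> c = (\<lambda>\<alpha>. if \<alpha> = \<gamma> then c else 0)"

lemma Aplus_coeff_monom_coeff: "fin_multi \<gamma> \<Longrightarrow> Aplus_coeff (monom_coeff \<gamma> c)"
  unfolding Aplus_coeff_def monom_coeff_def
  by (auto intro!: finite_nonzero_values_imp_summable_on)

lemma infsum_single: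
  fixes f :: "'a \<Rightarrow> 'b::{comm_monoid_add,t2_space}"
  assumes "\<And>x. x \<noteq> y \<Longrightarrow> f x = 0"
  shows "infsum f UNIV = f y"
  using infsum_cong_neutral[of "{y}" UNIV f f] assms by auto

lemma Aplus_eval_monom_coeff [simp]: "Aplus_eval (monom_coeff \<gamma> c) z = c * monom \<gamma> z"
  unfolding Aplus_eval_def by (subst infsum_single[where y=\<gamma>]) (auto simp: monom_coeff_def)

lemma coeff_norm_monom_coeff [simp]: "coeff_norm (monom_coeff \<gamma> c) = cmod c"
  unfolding coeff_norm_def by (subst infsum_single[where y=\<gamma>]) (auto simp: monom_coeff_def)

section \<open>Uniqueness of coefficients\<close>

definition polydisc :: "nat \<Rightarrow> (nat \<Rightarrow> complex) set" where
  "polydisc n = {z. (\<forall>j. cmod (z j) < 1) \<and> (\<forall>j\<ge>n. z j = 0)}"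

definition coeffs_below :: "nat \<Rightarrow> ((nat \<Rightarrow> nat) \<Rightarrow> complex) \<Rightarrow> bool" where
  "coeffs_below n a \<longleftrightarrow> (\<forall>\<alpha>. a \<alpha> \<noteq> 0 \<longrightarrow> (\<forall>j\<ge>n. \<alpha> j = 0))"

lemma polydisc_le_1: "z \<in> polydisc n \<Longrightarrow> \<forall>j. cmod (z j) \<le> 1"
  by (auto simp: polydisc_def less_imp_le)

lemma polydisc_subset_c0_ball: "polydisc n \<subseteq> c0_ball"
proof
  fix z assume z: "z \<in> polydisc n"
  then have "eventually (\<lambda>j. z j = 0) sequentially"
    by (auto simp: polydisc_def eventually_sequentially)
  then have "z \<longlonglongrightarrow> 0" by (rule tendsto_eventually)
  with z show "z \<in> c0_ball" by (simp add: polydisc_def c0_ball_def)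
qed

lemma Aplus_eval_slice_eq_0:
  assumes a: "Aplus_coeff a" and vanish: "\<forall>z\<in>polydisc (Suc n). z n \<noteq> 0 \<longrightarrow> Aplus_eval a z = 0"
    and z: "z \<in> polydisc n"
  shows "Aplus_eval (\<lambda>\<alpha>. if \<alpha> n = 0 then a \<alpha> else 0) z = 0"
proof -
  define a0 where "a0 = (\<lambda>\<alpha>. if \<alpha> n = 0 then a \<alpha> else 0)"
  define a1 where "a1 = (\<lambda>\<alpha>. if \<not> \<alpha> n = 0 then a \<alpha> else 0)"
  have a1_coeff: "Aplus_coeff a1" unfolding a1_def by (rule Aplus_coeff_restrict[OF a])
  have bound: "cmod (Aplus_eval a0 z) \<le> r * coeff_norm a1" if r: "r \<in> {0<..<1}" for r
  proof -
    define z' where "z' = z(n := complex_of_real r)"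
    have z': "z' \<in> polydisc (Suc n)" "z' n \<noteq> 0"
      using z r by (auto simp: z'_def polydisc_def le_Suc_eq)
    have "Aplus_eval a0 z' = Aplus_eval a0 z"
      unfolding Aplus_eval_def a0_def z'_def by (intro infsum_cong) (simp add: monom_fun_upd_other)
    then have "Aplus_eval a0 z + Aplus_eval a1 z' = Aplus_eval a z'"
      unfolding Aplus_eval_split[OF a polydisc_le_1[OF z'(1)], of "\<lambda>\<alpha>. \<alpha> n = 0"]
      by (simp add: a0_def a1_def)
    also have "\<dots> = 0" using vanish z' by blast
    finally have "cmod (Aplus_eval a0 z) = cmod (Aplus_eval a1 z')"
      by (simp add: add_eq_0_iff2 norm_minus_commute)
    also have "\<dots> \<le> r * coeff_norm a1"
    proof (rule norm_Aplus_eval_le[OF a1_coeff polydisc_le_1[OF z'(1)]])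
      fix \<alpha> assume "a1 \<alpha> \<noteq> 0"
      then have "\<alpha> n \<noteq> 0" "fin_multi \<alpha>" using Aplus_coeff_fin_multi[OF a, of \<alpha>] by (auto simp: a1_def split: if_splits)
      then have "cmod (monom \<alpha> z') \<le> cmod (z' n)"
        by (intro norm_monom_le_coord polydisc_le_1[OF z'(1)])
      then show "cmod (monom \<alpha> z') \<le> r" using r by (simp add: z'_def)
    qed (use r in \<open>simp_all add: a1_def\<close>)
    finally show ?thesis .
  qed
  have "cmod (Aplus_eval a0 z) \<le> 0"
  proof (rule tendsto_lowerbound)
    show "((\<lambda>r. r * coeff_norm a1) \<longlongrightarrow> 0) (at_right 0)"
      by (intro tendsto_mult_left_zero tendsto_ident_at)
    show "eventually (\<lambda>r. cmod (Aplus_eval a0 z) \<le> r * coeff_norm a1) (at_right 0)"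
      using eventually_at_right_real[of 0 1] bound by (auto elim: eventually_mono)
  qed simp
  then show ?thesis by (simp add: a0_def)
qed

definition shift_coeff :: "nat \<Rightarrow> ((nat \<Rightarrow> nat) \<Rightarrow> complex) \<Rightarrow> (nat \<Rightarrow> nat) \<Rightarrow> complex" where
  "shift_coeff n a = (\<lambda>\<beta>. a (\<beta>(n := Suc (\<beta> n))))"

lemma Aplus_coeff_shift_coeff:
  assumes "Aplus_coeff a"
  shows "Aplus_coeff (shift_coeff n a)"
  unfolding Aplus_coeff_def
proof
  show "\<forall>\<alpha>. \<not> fin_multi \<alpha> \<longrightarrow> shift_coeff n a \<alpha> = 0"
    using assms by (simp add: Aplus_coeff_def shift_coeff_def)
  define g where "g = (\<lambda>\<beta>::nat \<Rightarrow> nat. \<beta>(n := Suc (\<beta> n)))"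
  have "inj g" unfolding g_def inj_def by (metis fun_upd_idem_iff fun_upd_upd nat.inject)
  moreover have "(\<lambda>\<alpha>. cmod (a \<alpha>)) summable_on range g"
    by (rule summable_on_subset_banach[OF Aplus_coeff_summable[OF assms]]) simp
  ultimately have "((\<lambda>\<alpha>. cmod (a \<alpha>)) \<circ> g) summable_on UNIV"
    by (simp add: summable_on_reindex)
  then show "(\<lambda>\<alpha>. cmod (shift_coeff n a \<alpha>)) summable_on UNIV"
    by (simp add: shift_coeff_def g_def o_def)
qed

lemma Aplus_eval_shift_coeff:
  assumes a: "Aplus_coeff a" and slice: "\<And>\<alpha>. \<alpha> n = 0 \<Longrightarrow> a \<alpha> = 0"
    and z: "\<forall>j. cmod (z j) \<le> 1"
  shows "Aplus_eval a z = z n * Aplus_eval (shift_coeff n a) z"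
proof -
  define g where "g = (\<lambda>\<beta>::nat \<Rightarrow> nat. \<beta>(n := Suc (\<beta> n)))"
  have "inj g" unfolding g_def inj_def by (metis fun_upd_idem_iff fun_upd_upd nat.inject)
  have "range g = {\<alpha>. \<alpha> n \<noteq> 0}"
  proof (intro equalityI subsetI)
    fix \<alpha> :: "nat \<Rightarrow> nat" assume "\<alpha> \<in> {\<alpha>. \<alpha> n \<noteq> 0}"
    then have "\<alpha> = g (\<alpha>(n := \<alpha> n - 1))" by (auto simp: g_def)
    then show "\<alpha> \<in> range g" by blast
  qed (auto simp: g_def)
  then have "Aplus_eval a z = infsum (\<lambda>\<alpha>. a \<alpha> * monom \<alpha> z) (range g)"
    unfolding Aplus_eval_def by (intro infsum_cong_neutral) (auto intro: slice)
  also have "\<dots> = infsum (\<lambda>\<beta>. a (g \<beta>) * monom (g \<beta>) z) UNIV"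
    using infsum_reindex[OF \<open>inj g\<close>] by (simp add: o_def)
  also have "\<dots> = infsum (\<lambda>\<beta>. z n * (shift_coeff n a \<beta> * monom \<beta> z)) UNIV"
  proof (rule infsum_cong)
    fix \<beta>
    show "a (g \<beta>) * monom (g \<beta>) z = z n * (shift_coeff n a \<beta> * monom \<beta> z)"
      using Aplus_coeff_fin_multi[OF a, of "g \<beta>"]
      by (cases "a (g \<beta>) = 0") (auto simp: g_def shift_coeff_def monom_increment)
  qed
  also have "\<dots> = z n * Aplus_eval (shift_coeff n a) z"
    unfolding Aplus_eval_def
    by (intro infsum_cmult_right summable_Aplus_series Aplus_coeff_shift_coeff a z)
  finally show ?thesis .
qed

text \<open>Induction on the exponent of z n: the part free of z n vanishes by the hypothesis for the
  first n variables, and the rest of a is z n times shift_coeff n a.\<close>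
lemma coeff_eq_0_polydisc_Suc:
  assumes IH: "\<And>b. Aplus_coeff b \<Longrightarrow> coeffs_below n b \<Longrightarrow> \<forall>z\<in>polydisc n. Aplus_eval b z = 0 \<Longrightarrow> b = (\<lambda>_. 0)"
    and a: "Aplus_coeff a" "coeffs_below (Suc n) a"
    and vanish: "\<forall>z\<in>polydisc (Suc n). z n \<noteq> 0 \<longrightarrow> Aplus_eval a z = 0"
  shows "a \<alpha> = 0"
proof -
  have slice: "a \<alpha> = 0" if "\<alpha> n = 0"
    and "Aplus_coeff a" "coeffs_below (Suc n) a" "\<forall>z\<in>polydisc (Suc n). z n \<noteq> 0 \<longrightarrow> Aplus_eval a z = 0"
    for a \<alpha>
  proof -
    have "coeffs_below n (\<lambda>\<alpha>. if \<alpha> n = 0 then a \<alpha> else 0)"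
      using that(3) by (auto simp: coeffs_below_def) (metis le_antisym not_less_eq_eq)
    with that have "(\<lambda>\<alpha>. if \<alpha> n = 0 then a \<alpha> else 0) = (\<lambda>_. 0)"
      by (intro IH Aplus_coeff_restrict ballI Aplus_eval_slice_eq_0[OF that(2,4)])
    from fun_cong[OF this, of \<alpha>] show ?thesis using that(1) by simp
  qed
  have "a \<alpha> = 0" if "\<alpha> n = k"
    and "Aplus_coeff a" "coeffs_below (Suc n) a" "\<forall>z\<in>polydisc (Suc n). z n \<noteq> 0 \<longrightarrow> Aplus_eval a z = 0"
    for k a \<alpha>
    using that
  proof (induction k arbitrary: a \<alpha>)
    case 0
    then show ?case by (intro slice[of \<alpha> a]) simp_all
  next
    case (Suc k)
    let ?a' = "shift_coeff n a"
    have eval: "Aplus_eval a z = z n * Aplus_eval ?a' z" if "z \<in> polydisc (Suc n)" for z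
      using Suc.prems slice by (intro Aplus_eval_shift_coeff polydisc_le_1[OF that]) auto
    have "?a' (\<alpha>(n := k)) = 0"
    proof (rule Suc.IH[where a="?a'" and \<alpha>="\<alpha>(n := k)"])
      show "Aplus_coeff ?a'" by (rule Aplus_coeff_shift_coeff[OF Suc.prems(2)])
      show "coeffs_below (Suc n) ?a'"
        using Suc.prems(3) by (auto simp: coeffs_below_def shift_coeff_def)
      show "\<forall>z\<in>polydisc (Suc n). z n \<noteq> 0 \<longrightarrow> Aplus_eval ?a' z = 0"
        using Suc.prems(4) eval by auto
    qed simp
    then show ?case using Suc.prems(1) by (simp add: shift_coeff_def fun_upd_idem)
  qed
  from this[OF refl a vanish] show ?thesis .
qed

lemma coeff_eq_0_polydisc:
  "Aplus_coeff a \<Longrightarrow> coeffs_below n a \<Longrightarrow> \<forall>z\<in>polydisc n. Aplus_eval a z = 0 \<Longrightarrow> a = (\<lambda>_. 0)"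
proof (induction n arbitrary: a)
  case 0
  have "(\<lambda>_. 0) \<in> polydisc 0" by (simp add: polydisc_def)
  with "0.prems"(3) have "Aplus_eval a (\<lambda>_. 0) = 0" by blast
  then have "a (\<lambda>_. 0) = 0" by (simp add: Aplus_eval_at_0[OF "0.prems"(1)])
  moreover have "\<alpha> = (\<lambda>_. 0)" if "a \<alpha> \<noteq> 0" for \<alpha>
    using "0.prems"(2) that by (auto simp: coeffs_below_def)
  ultimately show ?case by fastforce
next
  case (Suc n)
  show ?case
  proof
    fix \<alpha>
    show "a \<alpha> = 0"
      by (rule coeff_eq_0_polydisc_Suc[OF Suc.IH Suc.prems(1,2)]) (use Suc.prems(3) in auto)
  qed
qed

lemma Aplus_coeff_unique:
  assumes a: "Aplus_coeff a" and vanish: "\<forall>z\<in>c0_ball. Aplus_eval a z = 0"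
  shows "a = (\<lambda>_. 0)"
proof
  fix \<alpha>
  show "a \<alpha> = 0"
  proof (cases "fin_multi \<alpha>")
    case False
    then show ?thesis using a by (auto simp: Aplus_coeff_def)
  next
    case True
    then obtain n where "{j. \<alpha> j \<noteq> 0} \<subseteq> {..<n}"
      using finite_nat_bounded by (auto simp: fin_multi_def)
    then have n: "\<forall>j\<ge>n. \<alpha> j = 0" by auto
    define b where "b = (\<lambda>\<beta>. if \<forall>j\<ge>n. \<beta> j = 0 then a \<beta> else 0)"
    have "Aplus_eval b z = Aplus_eval a z" if z: "z \<in> polydisc n" for z
      unfolding Aplus_eval_def
    proof (rule infsum_cong)
      fix \<beta>
      show "b \<beta> * monom \<beta> z = a \<beta> * monom \<beta> z"
      proof (cases "a \<beta> = 0 \<or> (\<forall>j\<ge>n. \<beta> j = 0)")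
        case False
        then obtain j where j: "j \<ge> n" "\<beta> j \<noteq> 0" and "a \<beta> \<noteq> 0" by auto
        have "monom \<beta> z = 0"
          by (rule monom_eq_0[OF Aplus_coeff_fin_multi[OF a \<open>a \<beta> \<noteq> 0\<close>] j(2)])
            (use z j(1) in \<open>simp add: polydisc_def\<close>)
        then show ?thesis by simp
      qed (auto simp: b_def)
    qed
    then have "\<forall>z\<in>polydisc n. Aplus_eval b z = 0"
      using vanish polydisc_subset_c0_ball by auto
    moreover have "Aplus_coeff b" unfolding b_def by (rule Aplus_coeff_restrict[OF a])
    moreover have "coeffs_below n b" by (simp add: b_def coeffs_below_def)
    ultimately have "b = (\<lambda>_. 0)" by (intro coeff_eq_0_polydisc)
    from fun_cong[OF this, of \<alpha>] show ?thesis using n by (simp add: b_def)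
  qed
qed

definition Aplus_fun :: "((nat \<Rightarrow> nat) \<Rightarrow> complex) \<Rightarrow> (nat \<Rightarrow> complex) \<Rightarrow> complex" where
  "Aplus_fun a = restrict (Aplus_eval a) c0_ball"

lemma c0_ball_le_1: "z \<in> c0_ball \<Longrightarrow> \<forall>j. cmod (z j) \<le> 1"
  by (auto simp: c0_ball_def less_imp_le)

lemma zero_in_c0_ball: "(\<lambda>_. 0) \<in> c0_ball"
  by (simp add: c0_ball_def)

lemma Aplus_iff: "f \<in> Aplus \<longleftrightarrow> (\<exists>a. Aplus_coeff a \<and> f = Aplus_fun a)"
  by (auto simp: Aplus_def Aplus_fun_def)

lemma Aplus_fun_eq_iff: "Aplus_fun a = Aplus_fun b \<longleftrightarrow> (\<forall>z\<in>c0_ball. Aplus_eval a z = Aplus_eval b z)"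
  by (metis Aplus_fun_def restrict_apply' restrict_ext)

lemma Aplus_coeff_eqI:
  assumes "Aplus_coeff a" "Aplus_coeff b" "\<forall>z\<in>c0_ball. Aplus_eval a z = Aplus_eval b z"
  shows "a = b"
proof -
  have "(\<lambda>\<alpha>. a \<alpha> - b \<alpha>) = (\<lambda>_. 0)"
    using assms by (intro Aplus_coeff_unique Aplus_coeff_diff) (simp_all add: Aplus_eval_diff c0_ball_le_1)
  then show ?thesis by (meson eq_iff_diff_eq_0 ext fun_cong)
qed

lemma Aplus_norm_Aplus_fun:
  assumes "Aplus_coeff a"
  shows "Aplus_norm (Aplus_fun a) = coeff_norm a"
  unfolding Aplus_norm_def
proof (rule the_equality)
  show "\<exists>a'. Aplus_coeff a' \<and> Aplus_fun a = restrict (Aplus_eval a') c0_ball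
          \<and> coeff_norm a = infsum (\<lambda>\<alpha>. cmod (a' \<alpha>)) UNIV"
    using assms by (auto simp: Aplus_fun_def coeff_norm_def)
  fix s assume "\<exists>a'. Aplus_coeff a' \<and> Aplus_fun a = restrict (Aplus_eval a') c0_ball
                   \<and> s = infsum (\<lambda>\<alpha>. cmod (a' \<alpha>)) UNIV"
  then obtain a' where "Aplus_coeff a'" "Aplus_fun a = Aplus_fun a'" "s = coeff_norm a'"
    by (auto simp: Aplus_fun_def coeff_norm_def)
  with assms show "s = coeff_norm a" by (metis Aplus_fun_eq_iff Aplus_coeff_eqI)
qed

section \<open>Superposition of coefficient families\<close>

definition coeff_superpos ::
    "((nat \<Rightarrow> nat) \<Rightarrow> complex) \<Rightarrow> ((nat \<Rightarrow> nat) \<Rightarrow> (nat \<Rightarrow> nat) \<Rightarrow> complex) \<Rightarrow> (nat \<Rightarrow> nat) \<Rightarrow> complex" where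
  "coeff_superpos b c = (\<lambda>\<beta>. infsum (\<lambda>\<alpha>. b \<alpha> * c \<alpha> \<beta>) UNIV)"

locale coeff_superposition =
  fixes b :: "(nat \<Rightarrow> nat) \<Rightarrow> complex" and c :: "(nat \<Rightarrow> nat) \<Rightarrow> (nat \<Rightarrow> nat) \<Rightarrow> complex"
  assumes b_summable: "(\<lambda>\<alpha>. cmod (b \<alpha>)) summable_on UNIV"
    and c_coeff: "\<And>\<alpha>. Aplus_coeff (c \<alpha>)"
    and c_norm: "\<And>\<alpha>. coeff_norm (c \<alpha>) \<le> 1"
begin

lemma abs_summable_terms: "(\<lambda>(\<alpha>, \<beta>). cmod (b \<alpha> * c \<alpha> \<beta>)) summable_on UNIV"
proof -
  have row: "((\<lambda>\<beta>. cmod (b \<alpha> * c \<alpha> \<beta>)) has_sum cmod (b \<alpha>) * coeff_norm (c \<alpha>)) UNIV" for \<alpha>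
    unfolding coeff_norm_def norm_mult
    by (intro has_sum_cmult_right has_sum_infsum Aplus_coeff_summable c_coeff)
  have "(\<lambda>\<alpha>. cmod (b \<alpha>) * coeff_norm (c \<alpha>)) summable_on UNIV"
    using c_norm coeff_norm_nonneg
    by (intro summable_on_comparison_test[OF b_summable]) (simp_all add: mult_left_le)
  then have "(\<lambda>(\<alpha>, \<beta>). cmod (b \<alpha> * c \<alpha> \<beta>)) summable_on Sigma UNIV (\<lambda>_. UNIV)"
    by (intro summable_on_SigmaI[where g="\<lambda>\<alpha>. cmod (b \<alpha>) * coeff_norm (c \<alpha>)"]) (simp_all add: row)
  then show ?thesis by simp
qed

lemma abs_summable_terms_swap: "(\<lambda>(\<beta>, \<alpha>). cmod (b \<alpha> * c \<alpha> \<beta>)) summable_on UNIV"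
  using abs_summable_terms summable_on_swap[of "\<lambda>(\<alpha>, \<beta>). cmod (b \<alpha> * c \<alpha> \<beta>)" UNIV UNIV] by simp

lemma abs_summable_column: "(\<lambda>\<alpha>. cmod (b \<alpha> * c \<alpha> \<beta>)) summable_on UNIV"
  using summable_on_SigmaD1[OF abs_summable_terms_swap[unfolded UNIV_Times_UNIV[symmetric]]] by simp

lemma Aplus_coeff_superpos: "Aplus_coeff (coeff_superpos b c)"
  unfolding Aplus_coeff_def
proof
  show "\<forall>\<beta>. \<not> fin_multi \<beta> \<longrightarrow> coeff_superpos b c \<beta> = 0"
    using c_coeff by (simp add: Aplus_coeff_def coeff_superpos_def)
  have "(\<lambda>\<beta>. infsum (\<lambda>\<alpha>. cmod (b \<alpha> * c \<alpha> \<beta>)) UNIV) summable_on UNIV"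
    using summable_on_SigmaD[OF abs_summable_terms_swap[unfolded UNIV_Times_UNIV[symmetric]]]
      abs_summable_column by simp
  then show "(\<lambda>\<beta>. cmod (coeff_superpos b c \<beta>)) summable_on UNIV"
    unfolding coeff_superpos_def
    by (rule summable_on_comparison_test) (auto intro: norm_infsum_bound abs_summable_column)
qed

lemma Aplus_eval_superpos:
  assumes z: "\<forall>j. cmod (z j) \<le> 1"
  shows "Aplus_eval (coeff_superpos b c) z = infsum (\<lambda>\<alpha>. b \<alpha> * Aplus_eval (c \<alpha>) z) UNIV"
proof -
  have "(\<lambda>(\<beta>, \<alpha>). b \<alpha> * c \<alpha> \<beta> * monom \<beta> z) summable_on UNIV \<times> UNIV"
  proof (rule abs_summable_summable, rule Infinite_Sum.abs_summable_on_comparison_test')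
    show "(\<lambda>(\<beta>, \<alpha>). cmod (b \<alpha> * c \<alpha> \<beta>)) summable_on UNIV \<times> UNIV"
      using abs_summable_terms_swap by simp
    show "norm ((\<lambda>(\<beta>, \<alpha>). b \<alpha> * c \<alpha> \<beta> * monom \<beta> z) x) \<le> (\<lambda>(\<beta>, \<alpha>). cmod (b \<alpha> * c \<alpha> \<beta>)) x" for x
      using norm_monom_le_1[OF z] by (auto simp: norm_mult mult_left_le split: prod.splits)
  qed
  then have "Aplus_eval (coeff_superpos b c) z
      = infsum (\<lambda>\<alpha>. infsum (\<lambda>\<beta>. b \<alpha> * c \<alpha> \<beta> * monom \<beta> z) UNIV) UNIV"
    unfolding Aplus_eval_def coeff_superpos_def
    using abs_summable_column
    by (subst infsum_swap_banach[symmetric]) (auto intro!: infsum_cong simp: infsum_cmult_left abs_summable_summable)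
  also have "\<dots> = infsum (\<lambda>\<alpha>. b \<alpha> * Aplus_eval (c \<alpha>) z) UNIV"
    unfolding Aplus_eval_def mult.assoc
    by (intro infsum_cong infsum_cmult_right summable_Aplus_series c_coeff z)
  finally show ?thesis .
qed

end

lemma unimodular_if_convex_combination:
  fixes b c :: "'a \<Rightarrow> complex"
  assumes b: "(\<lambda>\<alpha>. cmod (b \<alpha>)) summable_on UNIV" "infsum (\<lambda>\<alpha>. cmod (b \<alpha>)) UNIV \<le> 1"
    and c: "\<And>\<alpha>. cmod (c \<alpha>) \<le> 1"
    and sum: "infsum (\<lambda>\<alpha>. b \<alpha> * c \<alpha>) UNIV = 1"
    and "b \<alpha> \<noteq> 0"
  shows "cmod (c \<alpha>) = 1"
proof (rule ccontr)
  assume "cmod (c \<alpha>) \<noteq> 1"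
  with c have "cmod (c \<alpha>) < 1" by (simp add: order_less_le)
  have bc: "(\<lambda>\<alpha>. cmod (b \<alpha> * c \<alpha>)) summable_on UNIV"
    by (rule summable_on_comparison_test[OF b(1)]) (use c in \<open>simp_all add: norm_mult mult_left_le\<close>)
  have "1 = cmod (infsum (\<lambda>\<alpha>. b \<alpha> * c \<alpha>) UNIV)" using sum by simp
  also have "\<dots> \<le> infsum (\<lambda>\<alpha>. cmod (b \<alpha> * c \<alpha>)) UNIV"
    by (rule norm_infsum_bound[OF bc])
  also have "\<dots> < infsum (\<lambda>\<alpha>. cmod (b \<alpha>)) UNIV"
    using c \<open>cmod (c \<alpha>) < 1\<close> \<open>b \<alpha> \<noteq> 0\<close>
    by (intro has_sum_strict_mono[OF has_sum_infsum[OF bc] has_sum_infsum[OF b(1)], of \<alpha>])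
      (simp_all add: norm_mult mult_left_le)
  finally show False using b(2) by simp
qed

lemma coeff_concentrated_if_unimodular:
  assumes "Aplus_coeff a" "coeff_norm a \<le> 1" "cmod (a \<gamma>) = 1"
  shows "a = monom_coeff \<gamma> (a \<gamma>)"
proof
  fix \<beta>
  show "a \<beta> = monom_coeff \<gamma> (a \<gamma>) \<beta>"
  proof (cases "\<beta> = \<gamma>")
    case False
    have "(\<Sum>\<alpha>\<in>{\<gamma>, \<beta>}. cmod (a \<alpha>)) \<le> coeff_norm a"
      unfolding coeff_norm_def by (rule finite_sum_le_infsum) (simp_all add: Aplus_coeff_summable assms(1))
    with False assms(3) have "1 + cmod (a \<beta>) \<le> coeff_norm a" by simp
    with assms(2) have "cmod (a \<beta>) \<le> 0" by linarith
    with False show ?thesis by (simp add: monom_coeff_def)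
  qed (simp add: monom_coeff_def)
qed

section \<open>Isometric composition automorphisms\<close>

locale isometric_composition_automorphism =
  fixes \<phi> :: "(nat \<Rightarrow> complex) \<Rightarrow> (nat \<Rightarrow> complex)"
  assumes maps_ball: "\<forall>z\<in>c0_ball. \<phi> z \<in> c0_ball"
    and bij: "bij_betw (comp_op \<phi>) Aplus Aplus"
    and isom: "\<forall>f\<in>Aplus. Aplus_norm (comp_op \<phi> f) = Aplus_norm f"
begin

lemma comp_op_Aplus_fun_eq_iff:
  "comp_op \<phi> (Aplus_fun a) = Aplus_fun b \<longleftrightarrow> (\<forall>z\<in>c0_ball. Aplus_eval a (\<phi> z) = Aplus_eval b z)"
proof
  assume eq: "comp_op \<phi> (Aplus_fun a) = Aplus_fun b"
  show "\<forall>z\<in>c0_ball. Aplus_eval a (\<phi> z) = Aplus_eval b z"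
  proof
    fix z assume z: "z \<in> c0_ball"
    have "comp_op \<phi> (Aplus_fun a) z = Aplus_fun b z" by (simp only: eq)
    with z maps_ball show "Aplus_eval a (\<phi> z) = Aplus_eval b z" by (simp add: comp_op_def Aplus_fun_def)
  qed
next
  assume "\<forall>z\<in>c0_ball. Aplus_eval a (\<phi> z) = Aplus_eval b z"
  with maps_ball show "comp_op \<phi> (Aplus_fun a) = Aplus_fun b"
    unfolding comp_op_def Aplus_fun_def by (intro restrict_ext) simp
qed

lemma composition_coeff:
  assumes a: "Aplus_coeff a"
  obtains b where "Aplus_coeff b" "coeff_norm b = coeff_norm a"
    "\<forall>z\<in>c0_ball. Aplus_eval a (\<phi> z) = Aplus_eval b z"
proof -
  have fa: "Aplus_fun a \<in> Aplus" using a by (auto simp: Aplus_iff)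
  then have "comp_op \<phi> (Aplus_fun a) \<in> Aplus" using bij_betwE[OF bij] by blast
  then obtain b where b: "Aplus_coeff b" "comp_op \<phi> (Aplus_fun a) = Aplus_fun b"
    by (auto simp: Aplus_iff)
  have "coeff_norm b = Aplus_norm (comp_op \<phi> (Aplus_fun a))"
    using b by (simp add: Aplus_norm_Aplus_fun)
  also have "\<dots> = coeff_norm a"
    using isom fa a by (simp add: Aplus_norm_Aplus_fun)
  finally show ?thesis using that b by (simp add: comp_op_Aplus_fun_eq_iff)
qed

lemma composition_preimage_coeff:
  assumes b: "Aplus_coeff b"
  obtains a where "Aplus_coeff a" "coeff_norm a = coeff_norm b"
    "\<forall>z\<in>c0_ball. Aplus_eval a (\<phi> z) = Aplus_eval b z"
proof -
  have "Aplus_fun b \<in> Aplus" using b by (auto simp: Aplus_iff)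
  then obtain f where "f \<in> Aplus" "comp_op \<phi> f = Aplus_fun b"
    using bij_betw_imp_surj_on[OF bij] by (metis imageE)
  then obtain a where a: "Aplus_coeff a" "comp_op \<phi> (Aplus_fun a) = Aplus_fun b"
    by (auto simp: Aplus_iff)
  have "Aplus_fun a \<in> Aplus" using a by (auto simp: Aplus_iff)
  then have "coeff_norm a = Aplus_norm (comp_op \<phi> (Aplus_fun a))"
    using isom a(1) by (simp add: Aplus_norm_Aplus_fun)
  also have "\<dots> = coeff_norm b"
    using a b by (simp add: Aplus_norm_Aplus_fun)
  finally show ?thesis using that a by (simp add: comp_op_Aplus_fun_eq_iff)
qed

lemma composition_coeff_inject:
  assumes "Aplus_coeff a" "Aplus_coeff a'" "\<forall>z\<in>c0_ball. Aplus_eval a (\<phi> z) = Aplus_eval a' (\<phi> z)"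
  shows "a = a'"
proof -
  obtain b where "Aplus_coeff b" "\<forall>z\<in>c0_ball. Aplus_eval a' (\<phi> z) = Aplus_eval b z"
    using composition_coeff[OF assms(2)] by blast
  with assms have "comp_op \<phi> (Aplus_fun a) = Aplus_fun b" "comp_op \<phi> (Aplus_fun a') = Aplus_fun b"
    by (simp_all add: comp_op_Aplus_fun_eq_iff)
  then have "comp_op \<phi> (Aplus_fun a) = comp_op \<phi> (Aplus_fun a')" by simp
  moreover have "Aplus_fun a \<in> Aplus" "Aplus_fun a' \<in> Aplus" using assms(1,2) by (auto simp: Aplus_iff)
  ultimately have "Aplus_fun a = Aplus_fun a'" by (rule inj_onD[OF bij_betw_imp_inj_on[OF bij]])
  with assms(1,2) show ?thesis by (simp add: Aplus_fun_eq_iff Aplus_coeff_eqI)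
qed

lemma monom_preimages:
  obtains c where "\<And>\<alpha>. Aplus_coeff (c \<alpha>)" "\<And>\<alpha>. coeff_norm (c \<alpha>) \<le> 1"
    "\<And>\<alpha> z. fin_multi \<alpha> \<Longrightarrow> z \<in> c0_ball \<Longrightarrow> Aplus_eval (c \<alpha>) (\<phi> z) = monom \<alpha> z"
proof -
  have "\<exists>a. Aplus_coeff a \<and> coeff_norm a \<le> 1 \<and> (fin_multi \<alpha> \<longrightarrow> (\<forall>z\<in>c0_ball. Aplus_eval a (\<phi> z) = monom \<alpha> z))"
    for \<alpha>
  proof (cases "fin_multi \<alpha>")
    case True
    from composition_preimage_coeff[OF Aplus_coeff_monom_coeff[OF True, of 1]] show ?thesis
      by (metis Aplus_eval_monom_coeff coeff_norm_monom_coeff mult_1 norm_one order_refl)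
  next
    case False
    then show ?thesis by (intro exI[of _ "\<lambda>_. 0"]) (simp add: Aplus_coeff_def coeff_norm_def)
  qed
  then show ?thesis using that by metis
qed

lemma coeff_superpos_monom_preimages:
  assumes c: "\<And>\<alpha>. Aplus_coeff (c \<alpha>)" "\<And>\<alpha>. coeff_norm (c \<alpha>) \<le> 1"
    and c_eval: "\<And>\<alpha> z. fin_multi \<alpha> \<Longrightarrow> z \<in> c0_ball \<Longrightarrow> Aplus_eval (c \<alpha>) (\<phi> z) = monom \<alpha> z"
    and a: "Aplus_coeff a" and b: "Aplus_coeff b"
    and ab: "\<forall>z\<in>c0_ball. Aplus_eval a (\<phi> z) = Aplus_eval b z"
  shows "coeff_superpos b c = a"
proof -
  interpret coeff_superposition b c
    using b c by unfold_locales (simp_all add: Aplus_coeff_summable)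
  show ?thesis
  proof (rule composition_coeff_inject[OF Aplus_coeff_superpos a], intro ballI)
    fix z assume z: "z \<in> c0_ball"
    have "Aplus_eval (coeff_superpos b c) (\<phi> z) = infsum (\<lambda>\<alpha>. b \<alpha> * Aplus_eval (c \<alpha>) (\<phi> z)) UNIV"
      using maps_ball z by (intro Aplus_eval_superpos c0_ball_le_1) simp
    also have "\<dots> = Aplus_eval b z"
      unfolding Aplus_eval_def[of b]
    proof (rule infsum_cong)
      fix \<alpha>
      show "b \<alpha> * Aplus_eval (c \<alpha>) (\<phi> z) = b \<alpha> * monom \<alpha> z"
        using c_eval[OF Aplus_coeff_fin_multi[OF b] z] by (cases "b \<alpha> = 0") simp_all
    qed
    finally show "Aplus_eval (coeff_superpos b c) (\<phi> z) = Aplus_eval a (\<phi> z)"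
      using ab z by simp
  qed
qed

lemma coordinate_eq_monom:
  obtains \<epsilon> \<beta> where "cmod \<epsilon> = 1" "fin_multi \<beta>" "\<forall>z\<in>c0_ball. \<phi> z j = \<epsilon> * monom \<beta> z"
proof -
  let ?u = "unit_multi j"
  obtain b where b: "Aplus_coeff b" "coeff_norm b = 1" and b_eval: "\<forall>z\<in>c0_ball. \<phi> z j = Aplus_eval b z"
    using composition_coeff[OF Aplus_coeff_monom_coeff[OF fin_multi_unit_multi, of j 1]] by auto
  obtain \<alpha>0 where "b \<alpha>0 \<noteq> 0"
    using b(2) by (force simp: coeff_norm_def)
  obtain c where c: "\<And>\<alpha>. Aplus_coeff (c \<alpha>)" "\<And>\<alpha>. coeff_norm (c \<alpha>) \<le> 1"
    and c_eval: "\<And>\<alpha> z. fin_multi \<alpha> \<Longrightarrow> z \<in> c0_ball \<Longrightarrow> Aplus_eval (c \<alpha>) (\<phi> z) = monom \<alpha> z"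
    using monom_preimages by metis
  have "\<forall>z\<in>c0_ball. Aplus_eval (monom_coeff ?u 1) (\<phi> z) = Aplus_eval b z"
    using b_eval by simp
  then have "coeff_superpos b c = monom_coeff ?u 1"
    by (intro coeff_superpos_monom_preimages c c_eval b(1) Aplus_coeff_monom_coeff fin_multi_unit_multi)
  from fun_cong[OF this, of ?u] have sum: "infsum (\<lambda>\<alpha>. b \<alpha> * c \<alpha> ?u) UNIV = 1"
    by (simp add: coeff_superpos_def monom_coeff_def)
  have "cmod (c \<alpha> ?u) \<le> 1" for \<alpha>
    using norm_coeff_le_coeff_norm[OF c(1), of \<alpha> ?u] c(2)[of \<alpha>] by linarith
  then have "cmod (c \<alpha>0 ?u) = 1"
    using Aplus_coeff_summable[OF b(1)] b(2) sum \<open>b \<alpha>0 \<noteq> 0\<close>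
    by (intro unimodular_if_convex_combination[of b "\<lambda>\<alpha>. c \<alpha> ?u"]) (simp_all add: coeff_norm_def)
  then have "c \<alpha>0 = monom_coeff ?u (c \<alpha>0 ?u)"
    by (intro coeff_concentrated_if_unimodular c)
  then have "\<forall>z\<in>c0_ball. monom \<alpha>0 z = c \<alpha>0 ?u * \<phi> z j"
    using c_eval[OF Aplus_coeff_fin_multi[OF b(1) \<open>b \<alpha>0 \<noteq> 0\<close>]] by (metis Aplus_eval_monom_coeff monom_unit_multi)
  with \<open>cmod (c \<alpha>0 ?u) = 1\<close> show ?thesis
    by (intro that[of "inverse (c \<alpha>0 ?u)" \<alpha>0] Aplus_coeff_fin_multi[OF b(1) \<open>b \<alpha>0 \<noteq> 0\<close>])
      (auto simp: norm_divide field_simps)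
qed

context
  fixes \<epsilon> :: "nat \<Rightarrow> complex" and \<beta> :: "nat \<Rightarrow> nat \<Rightarrow> nat"
  assumes unimodular: "\<And>j. cmod (\<epsilon> j) = 1"
    and fin_exponent: "\<And>j. fin_multi (\<beta> j)"
    and coordinate: "\<And>j z. z \<in> c0_ball \<Longrightarrow> \<phi> z j = \<epsilon> j * monom (\<beta> j) z"
begin

lemma exponent_nonzero: "\<beta> j \<noteq> (\<lambda>_. 0)"
proof
  assume "\<beta> j = (\<lambda>_. 0)"
  then have "cmod (\<phi> (\<lambda>_. 0) j) = 1" using coordinate[OF zero_in_c0_ball] unimodular by simp
  moreover have "cmod (\<phi> (\<lambda>_. 0) j) < 1" using maps_ball zero_in_c0_ball by (auto simp: c0_ball_def)
  ultimately show False by simp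
qed

lemma phi_zero: "\<phi> (\<lambda>_. 0) = (\<lambda>_. 0)"
proof
  fix j
  obtain m where "\<beta> j m \<noteq> 0" using exponent_nonzero[of j] by auto
  then show "\<phi> (\<lambda>_. 0) j = 0"
    by (simp add: coordinate[OF zero_in_c0_ball] monom_eq_0[OF fin_exponent])
qed

lemma norm_coordinate_le_square:
  assumes "\<forall>i. \<beta> i \<noteq> unit_multi k" "0 \<le> t" "t < 1"
  shows "cmod (\<phi> (\<lambda>j. if j = k then complex_of_real t else 0) i) \<le> t\<^sup>2"
proof -
  define z where "z = (\<lambda>j. if j = k then complex_of_real t else 0)"
  have "z \<in> polydisc (Suc k)" using assms(2,3) by (auto simp: z_def polydisc_def)
  then have "z \<in> c0_ball" using polydisc_subset_c0_ball by blast
  then have "cmod (\<phi> z i) = cmod (monom (\<beta> i) z)" by (simp add: coordinate norm_mult unimodular)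
  also have "\<dots> \<le> t\<^sup>2"
  proof (cases "\<exists>m. m \<noteq> k \<and> \<beta> i m \<noteq> 0")
    case True
    then obtain m where "m \<noteq> k" "\<beta> i m \<noteq> 0" by blast
    then show ?thesis by (simp add: monom_eq_0[OF fin_exponent] z_def)
  next
    case False
    then have supp: "{j. \<beta> i j \<noteq> 0} = {k}" using exponent_nonzero[of i] by (auto; metis)
    have "\<beta> i k \<noteq> 1"
    proof
      assume "\<beta> i k = 1"
      with False have "\<beta> i = unit_multi k" by (auto simp: unit_multi_def fun_eq_iff)
      with assms(1) show False by blast
    qed
    with supp have "\<beta> i k \<ge> 2" by auto
    have "cmod (monom (\<beta> i) z) = t ^ \<beta> i k"
      unfolding monom_def supp using assms(2) by (simp add: z_def norm_power)
    also have "\<dots> \<le> t\<^sup>2" by (rule power_decreasing) (use \<open>\<beta> i k \<ge> 2\<close> assms(2,3) in auto)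
    finally show ?thesis .
  qed
  finally show ?thesis by (simp add: z_def)
qed

lemma unit_exponent_exists: "\<exists>i. \<beta> i = unit_multi k"
proof (rule ccontr)
  assume no_unit: "\<nexists>i. \<beta> i = unit_multi k"
  obtain a where a: "Aplus_coeff a" and a_eval: "\<forall>z\<in>c0_ball. Aplus_eval a (\<phi> z) = z k"
    using composition_preimage_coeff[OF Aplus_coeff_monom_coeff[OF fin_multi_unit_multi, of k 1]] by auto
  have "Aplus_eval a (\<phi> (\<lambda>_. 0)) = 0" using a_eval zero_in_c0_ball by simp
  then have "a (\<lambda>_. 0) = 0" by (simp add: phi_zero Aplus_eval_at_0[OF a])
  define t :: real where "t = 1 / (coeff_norm a + 2)"
  have t: "0 < t" "t < 1" "t * coeff_norm a < 1"
    using coeff_norm_nonneg[of a] by (auto simp: t_def field_simps)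
  define z where "z = (\<lambda>j. if j = k then complex_of_real t else 0)"
  have "z \<in> polydisc (Suc k)" using t by (auto simp: z_def polydisc_def)
  then have "z \<in> c0_ball" using polydisc_subset_c0_ball by blast
  have "t = cmod (Aplus_eval a (\<phi> z))" using a_eval \<open>z \<in> c0_ball\<close> t by (simp add: z_def)
  also have "\<dots> \<le> t\<^sup>2 * coeff_norm a"
  proof (rule norm_Aplus_eval_le_sup[OF a \<open>a (\<lambda>_. 0) = 0\<close>])
    show "\<forall>j. cmod (\<phi> z j) \<le> min 1 (t\<^sup>2)"
      using norm_coordinate_le_square[of k t] no_unit t maps_ball \<open>z \<in> c0_ball\<close>
      by (auto simp: z_def c0_ball_def less_imp_le)
  qed simp
  finally have "t * 1 \<le> t * (t * coeff_norm a)" by (simp add: power2_eq_square)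
  with t show False by simp
qed

lemma unit_exponents_surj:
  assumes "inj \<tau>" and \<tau>: "\<And>k. \<beta> (\<tau> k) = unit_multi k"
  shows "surj \<tau>"
proof (rule ccontr)
  assume "\<not> surj \<tau>"
  then obtain i where i: "i \<notin> range \<tau>" by blast
  \<comment> \<open>z^\<gamma> \<circ> \<phi> is a multiple of z^(\<beta> i), hence of z i \<circ> \<phi>; injectivity forces z^\<gamma> = z i\<close>
  define \<gamma> where "\<gamma> = reindex_multi \<tau> (\<beta> i)"
  define C where "C = monom (\<beta> i) (\<lambda>k. \<epsilon> (\<tau> k))"
  have "cmod C = 1" unfolding C_def by (rule norm_monom_unimodular) (simp add: unimodular)
  have "monom_coeff \<gamma> (\<epsilon> i / C) = monom_coeff (unit_multi i) 1"
  proof (rule composition_coeff_inject)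
    show "Aplus_coeff (monom_coeff \<gamma> (\<epsilon> i / C))"
      unfolding \<gamma>_def by (intro Aplus_coeff_monom_coeff fin_multi_reindex_multi assms fin_exponent)
    show "Aplus_coeff (monom_coeff (unit_multi i) 1)"
      by (rule Aplus_coeff_monom_coeff[OF fin_multi_unit_multi])
    show "\<forall>z\<in>c0_ball. Aplus_eval (monom_coeff \<gamma> (\<epsilon> i / C)) (\<phi> z)
                     = Aplus_eval (monom_coeff (unit_multi i) 1) (\<phi> z)"
    proof
      fix z assume z: "z \<in> c0_ball"
      have "\<phi> z \<circ> \<tau> = (\<lambda>k. (\<epsilon> \<circ> \<tau>) k * z k)"
        using coordinate[OF z] \<tau> by (simp add: o_def)
      then have "monom \<gamma> (\<phi> z) = C * monom (\<beta> i) z"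
        unfolding \<gamma>_def C_def by (simp add: monom_reindex_multi[OF assms(1)] monom_mult)
      with z \<open>cmod C = 1\<close> show "Aplus_eval (monom_coeff \<gamma> (\<epsilon> i / C)) (\<phi> z)
                     = Aplus_eval (monom_coeff (unit_multi i) 1) (\<phi> z)"
        by (auto simp: coordinate)
    qed
  qed
  then have "\<gamma> = unit_multi i"
    by (metis monom_coeff_def one_neq_zero)
  moreover have "\<gamma> i = 0" using i by (simp add: \<gamma>_def reindex_multi_outside)
  ultimately show False by (simp add: unit_multi_def)
qed

lemma phi_eq_weighted_permutation:
  obtains \<sigma> where "bij \<sigma>" "\<forall>z\<in>c0_ball. \<phi> z = (\<lambda>j. \<epsilon> j * z (\<sigma> j))"
proof -
  obtain \<tau> where \<tau>: "\<And>k. \<beta> (\<tau> k) = unit_multi k"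
    using unit_exponent_exists by metis
  have "inj \<tau>" by (rule injI) (metis \<tau> unit_multi_inject)
  then have "bij \<tau>" using unit_exponents_surj[OF _ \<tau>] by (simp add: bij_def)
  have "\<phi> z j = \<epsilon> j * z (inv \<tau> j)" if "z \<in> c0_ball" for z j
    using coordinate[OF that, of j] \<tau>[of "inv \<tau> j"] surj_f_inv_f[OF bij_is_surj[OF \<open>bij \<tau>\<close>]] by simp
  with \<open>bij \<tau>\<close> show ?thesis by (intro that[of "inv \<tau>"]) (auto simp: bij_imp_bij_inv)
qed

end

end

theorem theorem21:
  fixes \<phi> :: "(nat \<Rightarrow> complex) \<Rightarrow> (nat \<Rightarrow> complex)"
  assumes maps_ball: "\<forall>z\<in>c0_ball. \<phi> z \<in> c0_ball"
    and holo: "c0_holomorphic_on \<phi> c0_ball"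
    and into: "\<forall>f\<in>Aplus. comp_op \<phi> f \<in> Aplus"
    and bij: "bij_betw (comp_op \<phi>) Aplus Aplus"
    and isom: "\<forall>f\<in>Aplus. Aplus_norm (comp_op \<phi> f) = Aplus_norm f"
  shows "\<exists>\<sigma> :: nat \<Rightarrow> nat. \<exists>\<epsilon> :: nat \<Rightarrow> complex. bij \<sigma> \<and> (\<forall>j. cmod (\<epsilon> j) = 1) \<and>
           (\<forall>z\<in>c0_ball. \<phi> z = (\<lambda>j. \<epsilon> j * z (\<sigma> j)))"
proof -
  interpret isometric_composition_automorphism \<phi>
    using maps_ball bij isom by unfold_locales
  have "\<forall>j. \<exists>e b. cmod e = 1 \<and> fin_multi b \<and> (\<forall>z\<in>c0_ball. \<phi> z j = e * monom b z)"
    by (metis coordinate_eq_monom)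
  then obtain \<epsilon> \<beta> where "\<And>j. cmod (\<epsilon> j) = 1" "\<And>j. fin_multi (\<beta> j)"
    "\<And>j z. z \<in> c0_ball \<Longrightarrow> \<phi> z j = \<epsilon> j * monom (\<beta> j) z"
    by metis
  then obtain \<sigma> where "bij \<sigma>" "\<forall>z\<in>c0_ball. \<phi> z = (\<lambda>j. \<epsilon> j * z (\<sigma> j))"
    by (rule phi_eq_weighted_permutation)
  with \<open>\<And>j. cmod (\<epsilon> j) = 1\<close> show ?thesis by blast
qed

end
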